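(* Let $p, r \in \mathbb N$ and $S(p,r,1):=\sum_{n=1}^\infty \frac{(-1)^{n+1}H_n^{(p)}}{n+r}$. Then \begin{align*} S(p,r,1) &=(-1)^{r}S_{p,1}^{+,-}+(-1)^{r-1}\overline{\zeta}(p+1) +\sum_{j=1}^{p}(-1)^{p-j+r}\overline{\zeta}(j)\overline{H}_{r-1}^{(p-j+1)}\\ &\quad +(-1)^{p+r-1}\overline{\zeta}(1)H_{r-1}^{(p)} +(-1)^{p+r}\sum_{n=1}^{r-1}\frac{\overline{H}_{n}}{n^{p}}\,. \end{align*}
   Context: $H_n^{(q)}=\sum_{j=1}^n j^{-q}$, $\overline{H}_n^{(q)}=\sum_{j=1}^n (-1)^{j-1}j^{-q}$, $\overline{H}_n=\overline{H}_n^{(1)}$, with value $0$ for $n=0$. $\overline{\zeta}(s)=\sum_{n\ge1}(-1)^{n-1}n^{-s}$, so $\overline{\zeta}(1)=\log2$. $S_{p,q}^{+,-}:=\sum_{n=1}^\infty (-1)^{n-1}H_n^{(p)}/n^q$. Empty sums are $0$. *)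

theory Defs
  imports Complex_Main
begin

definition harm_gen :: "nat \<Rightarrow> nat \<Rightarrow> real" where
  "harm_gen q n = (\<Sum>j=1..n. 1 / real j ^ q)"

definition alt_harm :: "nat \<Rightarrow> nat \<Rightarrow> real" where
  "alt_harm q n = (\<Sum>j=1..n. (-1) ^ (j - 1) / real j ^ q)"

definition altzeta :: "nat \<Rightarrow> real" where
  "altzeta s = (\<Sum>n. (-1) ^ n / real (Suc n) ^ s)"

text \<open>S_{p,q}^{+,-} = sum_{n>=1} (-1)^(n-1) H_n^(p) / n^q.\<close>
definition S_pm :: "nat \<Rightarrow> nat \<Rightarrow> real" where
  "S_pm p q = (\<Sum>n. (-1) ^ n * harm_gen p (Suc n) / real (Suc n) ^ q)"

end

(* Write S(r) = sum_{n>=1} (-1)^(n-1) H(n)/(n+r), with H = H^(p), and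
   C(r) = sum_{m>=1} (-1)^(m-1) / (m^p (m+r)).  Splitting H(n+1) = H(n) + 1/(n+1)^p and shifting the
   index gives the recurrence S(r+1) = C(r) - S(r), starting from S(0) = S_{p,1}^{+,-}.
   C(0) is altzeta(p+1), and for r >= 1 the partial fraction decomposition of
   1/(m^p (m+r)) expresses C(r) through altzeta(1), ..., altzeta(p) and a tail of
   the alternating harmonic series; induction on r then yields the closed form.  All series
   converge by the Leibniz criterion, S(0) because H(n)/n decreases to 0. *)
theory Submission
  imports Defs "HOL-Analysis.Harmonic_Numbers"
begin

lemma harm_gen_Suc: "harm_gen p (Suc n) = harm_gen p n + 1 / real (Suc n) ^ p"
  by (simp add: harm_gen_def)

lemma harm_gen_nonneg: "0 \<le> harm_gen p n"
  by (simp add: harm_gen_def sum_nonneg)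

lemma harm_gen_le_harm: "1 \<le> p \<Longrightarrow> harm_gen p n \<le> harm n"
  unfolding harm_gen_def harm_def
proof (rule sum_mono)
  fix j assume "1 \<le> p" "j \<in> {1..n}"
  then have "real j \<le> real j ^ p" "1 \<le> real j"
    by (auto intro: self_le_power)
  then show "1 / real j ^ p \<le> inverse (real j)"
    by (simp add: divide_simps)
qed

lemma harm_gen_ge: "real n / real (Suc n) ^ p \<le> harm_gen p n"
proof -
  have "real (card {1..n}) * (1 / real (Suc n) ^ p) \<le> harm_gen p n"
    unfolding harm_gen_def
    by (rule sum_bounded_below) (auto intro!: divide_left_mono power_mono)
  then show ?thesis by simp
qed

lemma harm_div_LIMSEQ_0: "(\<lambda>n. harm n / real n :: real) \<longlonglongrightarrow> 0"
proof -
  have "(\<lambda>n. (harm n - ln (real n)) * (1 / real n) + ln (real n) / real n :: real)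
          \<longlonglongrightarrow> euler_mascheroni * 0 + 0"
    by (intro tendsto_intros euler_mascheroni_LIMSEQ)
  then show ?thesis by (simp add: add_divide_distrib[symmetric])
qed

lemma harm_gen_div_LIMSEQ_0:
  assumes "1 \<le> p"
  shows "(\<lambda>n. harm_gen p n / real n) \<longlonglongrightarrow> 0"
proof (rule tendsto_sandwich[OF _ _ tendsto_const harm_div_LIMSEQ_0])
  show "\<forall>\<^sub>F n in sequentially. 0 \<le> harm_gen p n / real n"
    by (simp add: harm_gen_nonneg)
  show "\<forall>\<^sub>F n in sequentially. harm_gen p n / real n \<le> harm n / real n"
    using harm_gen_le_harm[OF assms] by (intro always_eventually allI divide_right_mono) auto
qed

text \<open>\<open>H(n)/n\<close> is the mean of the non-increasing numbers \<open>1/j^p\<close>, \<open>j \<le> n\<close>.\<close>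
lemma decseq_harm_gen_div: "decseq (\<lambda>n. harm_gen p (Suc n) / real (Suc n))"
proof (rule decseq_SucI)
  fix n
  have "real (Suc n) / real (Suc (Suc n)) ^ p \<le> harm_gen p (Suc n)"
    by (rule harm_gen_ge)
  then show "harm_gen p (Suc (Suc n)) / real (Suc (Suc n)) \<le> harm_gen p (Suc n) / real (Suc n)"
    by (simp add: harm_gen_Suc[of p "Suc n"] divide_simps del: of_nat_Suc) (simp add: algebra_simps)
qed

lemma summable_alternating_inverse:
  fixes f :: "nat \<Rightarrow> real"
  assumes "\<And>n. 0 < f n" and "mono f" and "filterlim f at_top sequentially"
  shows "summable (\<lambda>n. (-1) ^ n / f n)"
proof -
  have "summable (\<lambda>n. (-1) ^ n * inverse (f n))"
  proof (rule summable_Leibniz')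
    show "(\<lambda>n. inverse (f n)) \<longlonglongrightarrow> 0"
      using assms(3) by (rule tendsto_inverse_0_at_top)
    show "0 \<le> inverse (f n)" for n
      using assms(1)[of n] by simp
    show "inverse (f (Suc n)) \<le> inverse (f n)" for n
      using assms(1) \<open>mono f\<close> by (simp add: le_imp_inverse_le monoD)
  qed
  then show ?thesis by (simp add: divide_inverse)
qed

lemma filterlim_real_Suc_at_top: "filterlim (\<lambda>n. real (Suc n)) at_top sequentially"
  using filterlim_real_sequentially by (subst filterlim_sequentially_Suc)

lemma altzeta_sums:
  assumes "1 \<le> q"
  shows "(\<lambda>n. (-1) ^ n / real (Suc n) ^ q) sums altzeta q"
proof -
  have "summable (\<lambda>n. (-1) ^ n / real (Suc n) ^ q)"
    using assms
    by (intro summable_alternating_inverse filterlim_pow_at_top filterlim_real_Suc_at_top)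
       (auto intro: monoI power_mono)
  then show ?thesis by (simp add: altzeta_def summable_sums)
qed

lemma alt_harm_Suc: "alt_harm q (Suc m) = alt_harm q m + (-1) ^ m / real (Suc m) ^ q"
  by (simp add: alt_harm_def)

lemma alt_harm_eq_sum_lessThan: "alt_harm q k = (\<Sum>i<k. (-1) ^ i / real (Suc i) ^ q)"
  by (induction k) (simp_all add: alt_harm_def)

lemma altzeta_tail_sums:
  assumes "1 \<le> q"
  shows "(\<lambda>m. (-1) ^ m / real (Suc m + k) ^ q) sums ((-1) ^ k * (altzeta q - alt_harm q k))"
proof -
  let ?a = "\<lambda>n. (-1) ^ n / real (Suc n) ^ q"
  have "(\<lambda>m. ?a (m + k)) sums (altzeta q - alt_harm q k)"
    using altzeta_sums[OF assms] sums_iff_shift[of ?a k] by (simp add: alt_harm_eq_sum_lessThan)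
  then have "(\<lambda>m. (-1) ^ k * ?a (m + k)) sums ((-1) ^ k * (altzeta q - alt_harm q k))"
    by (rule sums_mult)
  then show ?thesis by (simp add: power_add mult_ac)
qed

lemma S_pm_1_sums:
  assumes "1 \<le> p"
  shows "(\<lambda>n. (-1) ^ n * harm_gen p (Suc n) / real (Suc n)) sums S_pm p 1"
proof -
  have "summable (\<lambda>n. (-1) ^ n * (harm_gen p (Suc n) / real (Suc n)))"
  proof (rule summable_Leibniz')
    show "(\<lambda>n. harm_gen p (Suc n) / real (Suc n)) \<longlonglongrightarrow> 0"
      using harm_gen_div_LIMSEQ_0[OF assms] by (rule LIMSEQ_Suc)
    show "0 \<le> harm_gen p (Suc n) / real (Suc n)" for n
      by (simp add: harm_gen_nonneg)
    show "harm_gen p (Suc (Suc n)) / real (Suc (Suc n)) \<le> harm_gen p (Suc n) / real (Suc n)" for n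
      using decseq_harm_gen_div by (simp add: decseq_Suc_iff)
  qed
  then show ?thesis by (simp add: S_pm_def summable_sums)
qed

lemma partial_fractions_power_mult_shift:
  fixes x k :: "'a::field"
  assumes "x \<noteq> 0" and "k \<noteq> 0" and "x + k \<noteq> 0"
  shows "1 / (x ^ p * (x + k))
    = (\<Sum>i<p. (-1) ^ i / k ^ (i + 1) * (1 / x ^ (p - i))) + (-1) ^ p / k ^ p * (1 / (x + k))"
proof (induction p)
  case 0
  then show ?case by simp
next
  case (Suc p)
  have base: "1 / (x * (x + k)) = 1 / k * (1 / x) - 1 / k * (1 / (x + k))"
    using assms by (simp add: divide_simps)
  have "1 / (x ^ Suc p * (x + k)) = 1 / x * (1 / (x ^ p * (x + k)))"
    by simp
  also have "\<dots> = (\<Sum>i<p. (-1) ^ i / k ^ (i + 1) * (1 / x ^ (Suc p - i)))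
                    + (-1) ^ p / k ^ p * (1 / (x * (x + k)))"
    unfolding Suc sum_distrib_left by (simp add: Suc_diff_le algebra_simps sum_divide_distrib)
  also have "\<dots> = (\<Sum>i<Suc p. (-1) ^ i / k ^ (i + 1) * (1 / x ^ (Suc p - i)))
                    + (-1) ^ Suc p / k ^ Suc p * (1 / (x + k))"
    unfolding base by (simp add: algebra_simps)
  finally show ?case .
qed

definition alt_shift_sum :: "nat \<Rightarrow> nat \<Rightarrow> real" where
  "alt_shift_sum p k = (\<Sum>m. (-1) ^ m / (real (Suc m) ^ p * real (Suc m + k)))"

lemma alt_shift_sum_sums:
  "(\<lambda>m. (-1) ^ m / (real (Suc m) ^ p * real (Suc m + k))) sums alt_shift_sum p k"
proof -
  have "filterlim (\<lambda>m. real (Suc m) ^ p * real (Suc m + k)) at_top sequentially"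
    by (rule filterlim_at_top_mono[OF filterlim_real_Suc_at_top])
       (auto intro!: always_eventually mult_mono' [of 1 _ "real (Suc _)", simplified])
  then have "summable (\<lambda>m. (-1) ^ m / (real (Suc m) ^ p * real (Suc m + k)))"
    by (intro summable_alternating_inverse) (auto intro!: monoI mult_mono power_mono)
  then show ?thesis by (simp add: alt_shift_sum_def summable_sums)
qed

lemma alt_shift_sum_0: "alt_shift_sum p 0 = altzeta (p + 1)"
  using alt_shift_sum_sums[of p 0] altzeta_sums[of "p + 1"]
  by (simp add: mult.commute sums_unique2)

lemma alt_shift_sum_eq:
  assumes "1 \<le> k"
  shows "alt_shift_sum p k = (\<Sum>i<p. (-1) ^ i / real k ^ (i + 1) * altzeta (p - i))
                           + (-1) ^ p / real k ^ p * ((-1) ^ k * (altzeta 1 - alt_harm 1 k))"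
proof -
  have "(\<lambda>m. (\<Sum>i<p. (-1) ^ i / real k ^ (i + 1) * ((-1) ^ m / real (Suc m) ^ (p - i)))
            + (-1) ^ p / real k ^ p * ((-1) ^ m / real (Suc m + k) ^ 1))
        sums ((\<Sum>i<p. (-1) ^ i / real k ^ (i + 1) * altzeta (p - i))
              + (-1) ^ p / real k ^ p * ((-1) ^ k * (altzeta 1 - alt_harm 1 k)))"
    by (intro sums_add sums_sum sums_mult altzeta_sums altzeta_tail_sums) auto
  moreover have "(-1) ^ m / (real (Suc m) ^ p * real (Suc m + k))
      = (\<Sum>i<p. (-1) ^ i / real k ^ (i + 1) * ((-1) ^ m / real (Suc m) ^ (p - i)))
        + (-1) ^ p / real k ^ p * ((-1) ^ m / real (Suc m + k) ^ 1)" for m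
  proof -
    have "1 / (real (Suc m) ^ p * (real (Suc m) + real k))
        = (\<Sum>i<p. (-1) ^ i / real k ^ (i + 1) * (1 / real (Suc m) ^ (p - i)))
          + (-1) ^ p / real k ^ p * (1 / (real (Suc m) + real k))"
      using assms by (intro partial_fractions_power_mult_shift) auto
    then have "(-1) ^ m * (1 / (real (Suc m) ^ p * (real (Suc m) + real k)))
        = (-1) ^ m * ((\<Sum>i<p. (-1) ^ i / real k ^ (i + 1) * (1 / real (Suc m) ^ (p - i)))
          + (-1) ^ p / real k ^ p * (1 / (real (Suc m) + real k)))"
      by simp
    then show ?thesis
      by (simp only: distrib_left sum_distrib_left of_nat_add) (simp add: algebra_simps)
  qed
  ultimately show ?thesis
    using alt_shift_sum_sums[of p k] by (simp add: sums_unique2)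
qed

text \<open>As \<open>H(n+2) - 1/(n+2)^p = H(n+1)\<close>, the n-th term of the
  shifted series is \<open>c(n+1) - b(n+1)\<close>, where b, c are the terms of the given series and of
  \<^const>\<open>alt_shift_sum\<close>; moreover \<open>b 0 = c 0\<close>.\<close>
lemma harm_gen_shift_sums_Suc:
  assumes "(\<lambda>n. (-1) ^ n * harm_gen p (Suc n) / real (Suc n + r)) sums T"
  shows "(\<lambda>n. (-1) ^ n * harm_gen p (Suc n) / real (Suc n + Suc r)) sums (alt_shift_sum p r - T)"
proof -
  let ?b = "\<lambda>n. (-1) ^ n * harm_gen p (Suc n) / real (Suc n + r)"
  let ?c = "\<lambda>m. (-1) ^ m / (real (Suc m) ^ p * real (Suc m + r))"
  have "(\<lambda>n. ?c (Suc n)) sums (alt_shift_sum p r - ?c 0)"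
    using alt_shift_sum_sums sums_Suc_iff[of ?c "alt_shift_sum p r - ?c 0"] by simp
  moreover have "(\<lambda>n. ?b (Suc n)) sums (T - ?b 0)"
    using assms sums_Suc_iff[of ?b "T - ?b 0"] by simp
  ultimately have "(\<lambda>n. ?c (Suc n) - ?b (Suc n)) sums (alt_shift_sum p r - ?c 0 - (T - ?b 0))"
    by (rule sums_diff)
  moreover have "alt_shift_sum p r - ?c 0 - (T - ?b 0) = alt_shift_sum p r - T"
    by (simp add: harm_gen_def)
  moreover have "(\<lambda>n. ?c (Suc n) - ?b (Suc n))
      = (\<lambda>n. (-1) ^ n * harm_gen p (Suc n) / real (Suc n + Suc r))"
  proof
    fix n
    show "?c (Suc n) - ?b (Suc n) = (-1) ^ n * harm_gen p (Suc n) / real (Suc n + Suc r)"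
      by (simp add: harm_gen_Suc[of p "Suc n"] divide_simps del: of_nat_Suc of_nat_add)
         (simp add: algebra_simps)
  qed
  ultimately show ?thesis by simp
qed

definition S_shift_closed_form :: "nat \<Rightarrow> nat \<Rightarrow> real" where
  "S_shift_closed_form p r =
     (-1) ^ r * S_pm p 1 + (-1) ^ (r - 1) * altzeta (p + 1)
      + (\<Sum>j=1..p. (-1) ^ (p - j + r) * altzeta j * alt_harm (p - j + 1) (r - 1))
      + (-1) ^ (p + r - 1) * altzeta 1 * harm_gen p (r - 1)
      + (-1) ^ (p + r) * (\<Sum>n=1..r-1. alt_harm 1 n / real n ^ p)"

lemma S_shift_closed_form_1: "S_shift_closed_form p (Suc 0) = alt_shift_sum p 0 - S_pm p 1"
  by (simp add: S_shift_closed_form_def alt_shift_sum_0 alt_harm_def harm_gen_def)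

lemma S_shift_closed_form_Suc:
  "S_shift_closed_form p (Suc (Suc m)) = alt_shift_sum p (Suc m) - S_shift_closed_form p (Suc m)"
proof -
  let ?k = "real (Suc m)"
  let ?z = "\<lambda>j. (-1) ^ (p - j) / ?k ^ (p - j + 1) * altzeta j"
  have twisted: "(\<Sum>j=1..p. (-1) ^ (p - j + Suc (Suc m)) * altzeta j * alt_harm (p - j + 1) (Suc m))
      = (\<Sum>j=1..p. ?z j) - (\<Sum>j=1..p. (-1) ^ (p - j + Suc m) * altzeta j * alt_harm (p - j + 1) m)"
    unfolding sum_subtractf[symmetric]
  proof (intro sum.cong refl)
    fix j assume "j \<in> {1..p}"
    then obtain d where d: "p = j + d"
      by (metis atLeastAtMost_iff le_add_diff_inverse)
    show "(-1) ^ (p - j + Suc (Suc m)) * altzeta j * alt_harm (p - j + 1) (Suc m)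
        = ?z j - (-1) ^ (p - j + Suc m) * altzeta j * alt_harm (p - j + 1) m"
      unfolding d by (simp add: alt_harm_Suc power_add algebra_simps del: of_nat_Suc)
  qed
  have reindex: "(\<Sum>i<p. (-1) ^ i / ?k ^ (i + 1) * altzeta (p - i)) = (\<Sum>j=1..p. ?z j)"
    by (rule sum.reindex_bij_witness[of _ "\<lambda>j. p - j" "\<lambda>i. p - i"]) auto
  have "S_shift_closed_form p (Suc (Suc m)) = (-1) ^ m * S_pm p 1 + (-1) ^ Suc m * altzeta (p + 1)
      + (\<Sum>j=1..p. (-1) ^ (p - j + Suc (Suc m)) * altzeta j * alt_harm (p - j + 1) (Suc m))
      + (-1) ^ (p + Suc m) * altzeta 1 * harm_gen p (Suc m)
      + (-1) ^ (p + m) * ((\<Sum>n=1..m. alt_harm 1 n / real n ^ p) + alt_harm 1 (Suc m) / ?k ^ p)"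
    by (simp add: S_shift_closed_form_def)
  moreover have "S_shift_closed_form p (Suc m) = (-1) ^ Suc m * S_pm p 1 + (-1) ^ m * altzeta (p + 1)
      + (\<Sum>j=1..p. (-1) ^ (p - j + Suc m) * altzeta j * alt_harm (p - j + 1) m)
      + (-1) ^ (p + m) * altzeta 1 * harm_gen p m
      + (-1) ^ (p + Suc m) * (\<Sum>n=1..m. alt_harm 1 n / real n ^ p)"
    by (simp add: S_shift_closed_form_def)
  moreover have "alt_shift_sum p (Suc m) = (\<Sum>j=1..p. ?z j)
      + (-1) ^ p / ?k ^ p * ((-1) ^ Suc m * (altzeta 1 - alt_harm 1 (Suc m)))"
    by (simp only: alt_shift_sum_eq[of "Suc m"] reindex)
  ultimately show ?thesis
    unfolding twisted harm_gen_Suc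
    by (simp add: power_add algebra_simps del: of_nat_Suc)
qed

lemma harm_gen_shift_sums_closed_form:
  assumes "1 \<le> p"
  shows "(\<lambda>n. (-1) ^ n * harm_gen p (Suc n) / real (Suc n + Suc m)) sums S_shift_closed_form p (Suc m)"
proof (induction m)
  case 0
  have "(\<lambda>n. (-1) ^ n * harm_gen p (Suc n) / real (Suc n + 0)) sums S_pm p 1"
    using S_pm_1_sums[OF assms] by simp
  from harm_gen_shift_sums_Suc[OF this] show ?case
    by (simp only: S_shift_closed_form_1)
next
  case (Suc m)
  from harm_gen_shift_sums_Suc[OF Suc.IH] show ?case
    by (simp only: S_shift_closed_form_Suc)
qed

theorem lemma3:
  fixes p r :: nat
  assumes "p \<ge> 1" and "r \<ge> 1"
  shows "(\<lambda>n. (-1) ^ n * harm_gen p (Suc n) / real (Suc n + r)) sums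
     ((-1) ^ r * S_pm p 1 + (-1) ^ (r - 1) * altzeta (p + 1)
      + (\<Sum>j=1..p. (-1) ^ (p - j + r) * altzeta j * alt_harm (p - j + 1) (r - 1))
      + (-1) ^ (p + r - 1) * altzeta 1 * harm_gen p (r - 1)
      + (-1) ^ (p + r) * (\<Sum>n=1..r-1. alt_harm 1 n / real n ^ p))"
proof -
  obtain m where "r = Suc m"
    using assms(2) by (cases r) auto
  then show ?thesis
    using harm_gen_shift_sums_closed_form[OF assms(1), of m] by (simp add: S_shift_closed_form_def)
qed

end
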